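(* Let $\mathcal L$ be a language satisfying RBC with growth constant $K$. Then there is $N$ such that for every $w\in\mathcal L$ with $|w|\ge N$ that has a valid step, the set of exit words for $w$ with its minimal valid step $q$ has at most $2K^2$ elements.
   Context: A language is a set $\mathcal L$ of nonempty finite words over a finite alphabet $\mathcal A$, containing $\mathcal A$, closed under subwords, every word extendable on both sides. $Ex^\ell(w)=\{a:aw\in\mathcal L\}$, $Ex^r(w)=\{b:wb\in\mathcal L\}$; left special if $|Ex^\ell(w)|\ge2$, right special if $|Ex^r(w)|\ge2$, bispecial if both; regular bispecial if there is exactly one $\hat a\in Ex^\ell(w)$ with $\hat aw$ right special and exactly one $\hat b\in Ex^r(w)$ with $w\hat b$ left special. RBC: for some $n_0$ every bispecial word of length $\ge n_0$ is regular bispecial. Under RBC, $p(n+1)-p(n)$ ($p(n)$ the number of length-$n$ words of $\mathcal L$) equals a constant $K$ for all large $n$: the growth constant. For $n\ge2$, $w\in\mathcal A^n$ and integer $1\le q\le n/2$ with $w_{[q+1,n]}=w_{[1,n-q]}$, $w^{q\ast r}$ is the word of length $n+(r-1)q$ with $(w^{q\ast r})_{[q(i-1)+1,q(i-1)+n]}=w$ for $1\le i\le r$; $q$ is valid for $w$ in $\mathcal L$ if moreover $w^{q\ast2}\in\mathcal L$; the minimal valid step is the least one. An exit word for $w$ with step $q$ is a word $z=pw^{q\ast r}s$, $r\ge1$, $1\le|p|,|s|\le q$, such that $z\in\mathcal L$; $pw^{q\ast r}$ is not a suffix of $w^{q\ast(r+1)}$ but $p_{[2,|p|]}w^{q\ast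 r}$ is; and $w^{q\ast r}s$ is not a prefix of $w^{q\ast(r+1)}$ but $w^{q\ast r}s_{[1,|s|-1]}$ is (with $p_{[2,1]}$, $s_{[1,0]}$ empty). *)

theory Defs
  imports Main "HOL-Library.Sublist"
begin

definition language :: "'a set \<Rightarrow> 'a list set \<Rightarrow> bool" where
  "language A L \<longleftrightarrow> finite A
     \<and> (\<forall>w\<in>L. w \<noteq> [] \<and> set w \<subseteq> A)
     \<and> (\<forall>a\<in>A. [a] \<in> L)
     \<and> (\<forall>u x v. u @ x @ v \<in> L \<and> x \<noteq> [] \<longrightarrow> x \<in> L)
     \<and> (\<forall>w\<in>L. (\<exists>a. a # w \<in> L) \<and> (\<exists>b. w @ [b] \<in> L))"

definition Ex_l :: "'a list set \<Rightarrow> 'a list \<Rightarrow> 'a set" where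
  "Ex_l L w = {a. a # w \<in> L}"

definition Ex_r :: "'a list set \<Rightarrow> 'a list \<Rightarrow> 'a set" where
  "Ex_r L w = {b. w @ [b] \<in> L}"

definition left_special :: "'a list set \<Rightarrow> 'a list \<Rightarrow> bool" where
  "left_special L w \<longleftrightarrow> card (Ex_l L w) \<ge> 2"

definition right_special :: "'a list set \<Rightarrow> 'a list \<Rightarrow> bool" where
  "right_special L w \<longleftrightarrow> card (Ex_r L w) \<ge> 2"

definition bispecial :: "'a list set \<Rightarrow> 'a list \<Rightarrow> bool" where
  "bispecial L w \<longleftrightarrow> left_special L w \<and> right_special L w"

definition regular_bispecial :: "'a list set \<Rightarrow> 'a list \<Rightarrow> bool" where
  "regular_bispecial L w \<longleftrightarrow> bispecial L w
     \<and> (\<exists>!a. a \<in> Ex_l L w \<and> right_special L (a # w))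
     \<and> (\<exists>!b. b \<in> Ex_r L w \<and> left_special L (w @ [b]))"

definition RBC :: "'a list set \<Rightarrow> bool" where
  "RBC L \<longleftrightarrow> (\<exists>n0. \<forall>w\<in>L. bispecial L w \<and> length w \<ge> n0 \<longrightarrow> regular_bispecial L w)"

definition complexity :: "'a list set \<Rightarrow> nat \<Rightarrow> nat" where
  "complexity L n = card {w\<in>L. length w = n}"

definition growth_constant :: "'a list set \<Rightarrow> int \<Rightarrow> bool" where
  "growth_constant L K \<longleftrightarrow>
     (\<exists>n1. \<forall>n\<ge>n1. int (complexity L (Suc n)) - int (complexity L n) = K)"

definition has_period :: "'a list \<Rightarrow> nat \<Rightarrow> bool" where
  "has_period w q \<longleftrightarrow> drop q w = take (length w - q) w"

text \<open>w^{q*r}: word of length n+(r-1)q all of whose factors at positions q(i-1)+1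
  (1 <= i <= r) equal w (for w having period q): (w_[1,q])^(r-1) w.\<close>
definition qpow :: "'a list \<Rightarrow> nat \<Rightarrow> nat \<Rightarrow> 'a list" where
  "qpow w q r = concat (replicate (r - 1) (take q w)) @ w"

definition valid_step :: "'a list set \<Rightarrow> 'a list \<Rightarrow> nat \<Rightarrow> bool" where
  "valid_step L w q \<longleftrightarrow> length w \<ge> 2 \<and> 1 \<le> q \<and> 2 * q \<le> length w
     \<and> has_period w q \<and> qpow w q 2 \<in> L"

definition min_valid_step :: "'a list set \<Rightarrow> 'a list \<Rightarrow> nat" where
  "min_valid_step L w = (LEAST q. valid_step L w q)"

definition exit_words :: "'a list set \<Rightarrow> 'a list \<Rightarrow> nat \<Rightarrow> 'a list set" where
  "exit_words L w q = {z. \<exists>p s r. z = p @ qpow w q r @ s \<and> r \<ge> 1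
      \<and> 1 \<le> length p \<and> length p \<le> q \<and> 1 \<le> length s \<and> length s \<le> q
      \<and> z \<in> L
      \<and> \<not> suffix (p @ qpow w q r) (qpow w q (r + 1))
      \<and> suffix (tl p @ qpow w q r) (qpow w q (r + 1))
      \<and> \<not> prefix (qpow w q r @ s) (qpow w q (r + 1))
      \<and> prefix (qpow w q r @ butlast s) (qpow w q (r + 1))}"

end

theory Submission
  imports Defs
begin

text \<open>
  Let \<open>q\<close> be the minimal valid step of \<open>w\<close>, \<open>n = |w|\<close> and \<open>f\<close> the \<open>q\<close>-periodic extension
  of \<open>w\<close>. Every exit word has the form \<open>a f[j, n + rq + m) b\<close> with \<open>1 \<le> j \<le> q\<close>, \<open>m < q\<close>,
  \<open>a \<noteq> f (j - 1)\<close> and \<open>b \<noteq> f (n + m)\<close>: the letter \<open>a\<close> is a non-periodic left extension of the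
  window \<open>f[j, j + n)\<close> and \<open>b\<close> a non-periodic right extension of the window \<open>f[m, m + n)\<close>.
  By minimality of \<open>q\<close> the \<open>q\<close> windows are pairwise distinct words of length \<open>n\<close>, so there are
  at most \<open>\<Sum>\<^sub>v (|Ex\<^sub>l v| - 1) \<le> p(n + 1) - p(n) = K\<close> choices of \<open>(j, a)\<close>, and likewise of \<open>(m, b)\<close>.
  For fixed \<open>(j, a, m, b)\<close> at most two repetition counts \<open>r\<close> occur: if \<open>r\<close> and \<open>r + c\<close> with
  \<open>c \<ge> 2\<close> both occur, then \<open>f[j, n + rq + m)\<close> has the two left extensions \<open>a\<close> and \<open>f (j - 1)\<close>,
  both right special, so it is a long bispecial word that is not regular.
\<close>

lemma language_sublist:
  assumes "language A L" "sublist x z" "z \<in> L" "x \<noteq> []"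
  shows "x \<in> L"
  using assms unfolding language_def sublist_def by blast

lemma finite_words_of_length:
  assumes "language A L"
  shows "finite {v \<in> L. length v = n}"
proof (rule finite_subset)
  show "{v \<in> L. length v = n} \<subseteq> {xs. set xs \<subseteq> A \<and> length xs = n}"
    using assms unfolding language_def by blast
  show "finite {xs. set xs \<subseteq> A \<and> length xs = n}"
    using assms finite_lists_length_eq unfolding language_def by blast
qed

lemma finite_Ex_l:
  assumes "language A L"
  shows "finite (Ex_l L v)"
proof (rule finite_subset)
  show "Ex_l L v \<subseteq> A" using assms unfolding language_def Ex_l_def by fastforce
  show "finite A" using assms unfolding language_def by blast
qed

lemma finite_Ex_r:
  assumes "language A L"
  shows "finite (Ex_r L v)"
proof (rule finite_subset)
  show "Ex_r L v \<subseteq> A" using assms unfolding language_def Ex_r_def by fastforce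
  show "finite A" using assms unfolding language_def by blast
qed

lemma Ex_l_nonempty: "language A L \<Longrightarrow> v \<in> L \<Longrightarrow> Ex_l L v \<noteq> {}"
  and Ex_r_nonempty: "language A L \<Longrightarrow> v \<in> L \<Longrightarrow> Ex_r L v \<noteq> {}"
  unfolding language_def Ex_l_def Ex_r_def by blast+

lemma complexity_Suc_eq_sum_Ex_l:
  assumes "language A L" "n \<ge> 1"
  shows "complexity L (Suc n) = (\<Sum>v\<in>{v \<in> L. length v = n}. card (Ex_l L v))"
proof -
  have "{u \<in> L. length u = Suc n} = (\<lambda>(v, a). a # v) ` (SIGMA v:{v \<in> L. length v = n}. Ex_l L v)"
  proof (intro equalityI subsetI)
    fix u assume "u \<in> {u \<in> L. length u = Suc n}"
    then obtain a v where "u = a # v" "a # v \<in> L" "length v = n" by (cases u) auto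
    moreover from this have "v \<in> L"
      using language_sublist[OF assms(1) sublist_append_leftI[of v "[a]"]] assms(2)
      by (auto simp: Suc_le_eq)
    ultimately show "u \<in> (\<lambda>(v, a). a # v) ` (SIGMA v:{v \<in> L. length v = n}. Ex_l L v)"
      by (auto simp: Ex_l_def)
  qed (auto simp: Ex_l_def)
  moreover have "inj_on (\<lambda>(v, a). a # v) (SIGMA v:{v \<in> L. length v = n}. Ex_l L v)"
    by (auto simp: inj_on_def)
  ultimately show ?thesis
    unfolding complexity_def
    by (simp add: card_image card_SigmaI finite_words_of_length[OF assms(1)] finite_Ex_l[OF assms(1)])
qed

lemma complexity_Suc_eq_sum_Ex_r:
  assumes "language A L" "n \<ge> 1"
  shows "complexity L (Suc n) = (\<Sum>v\<in>{v \<in> L. length v = n}. card (Ex_r L v))"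
proof -
  have "{u \<in> L. length u = Suc n} = (\<lambda>(v, b). v @ [b]) ` (SIGMA v:{v \<in> L. length v = n}. Ex_r L v)"
  proof (intro equalityI subsetI)
    fix u assume "u \<in> {u \<in> L. length u = Suc n}"
    then obtain b v where "u = v @ [b]" "v @ [b] \<in> L" "length v = n" by (cases u rule: rev_cases) auto
    moreover from this have "v \<in> L"
      using language_sublist[OF assms(1) sublist_append_rightI[of v "[b]"]] assms(2)
      by (auto simp: Suc_le_eq)
    ultimately show "u \<in> (\<lambda>(v, b). v @ [b]) ` (SIGMA v:{v \<in> L. length v = n}. Ex_r L v)"
      by (auto simp: Ex_r_def)
  qed (auto simp: Ex_r_def)
  moreover have "inj_on (\<lambda>(v, b). v @ [b]) (SIGMA v:{v \<in> L. length v = n}. Ex_r L v)"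
    by (auto simp: inj_on_def)
  ultimately show ?thesis
    unfolding complexity_def
    by (simp add: card_image card_SigmaI finite_words_of_length[OF assms(1)] finite_Ex_r[OF assms(1)])
qed

lemma sum_excess_le:
  fixes E :: "'b \<Rightarrow> 'c set"
  assumes "finite W" "\<And>v. v \<in> W \<Longrightarrow> 1 \<le> card (E v)" "V \<subseteq> W"
  shows "int (\<Sum>v\<in>V. card (E v) - 1) \<le> int (\<Sum>v\<in>W. card (E v)) - int (card W)"
proof -
  have "(\<Sum>v\<in>V. card (E v) - 1) \<le> (\<Sum>v\<in>W. card (E v) - 1)"
    using assms(1,3) by (rule sum_mono2) simp
  also have "int (\<Sum>v\<in>W. card (E v) - 1) = (\<Sum>v\<in>W. int (card (E v)) - 1)"
    using assms(2) by (simp add: of_nat_diff)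
  finally show ?thesis by (simp add: sum_subtractf)
qed

lemma left_excess_le_complexity_diff:
  assumes "language A L" "n \<ge> 1" "V \<subseteq> {v \<in> L. length v = n}"
  shows "int (\<Sum>v\<in>V. card (Ex_l L v) - 1) \<le> int (complexity L (Suc n)) - int (complexity L n)"
proof -
  have "int (\<Sum>v\<in>V. card (Ex_l L v) - 1)
      \<le> int (\<Sum>v\<in>{v \<in> L. length v = n}. card (Ex_l L v)) - int (card {v \<in> L. length v = n})"
    by (rule sum_excess_le[OF finite_words_of_length[OF assms(1)] _ assms(3)])
      (use finite_Ex_l[OF assms(1)] Ex_l_nonempty[OF assms(1)] in \<open>auto simp: Suc_le_eq card_gt_0_iff\<close>)
  then show ?thesis
    by (subst complexity_Suc_eq_sum_Ex_l[OF assms(1,2)]) (simp add: complexity_def)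
qed

lemma right_excess_le_complexity_diff:
  assumes "language A L" "n \<ge> 1" "V \<subseteq> {v \<in> L. length v = n}"
  shows "int (\<Sum>v\<in>V. card (Ex_r L v) - 1) \<le> int (complexity L (Suc n)) - int (complexity L n)"
proof -
  have "int (\<Sum>v\<in>V. card (Ex_r L v) - 1)
      \<le> int (\<Sum>v\<in>{v \<in> L. length v = n}. card (Ex_r L v)) - int (card {v \<in> L. length v = n})"
    by (rule sum_excess_le[OF finite_words_of_length[OF assms(1)] _ assms(3)])
      (use finite_Ex_r[OF assms(1)] Ex_r_nonempty[OF assms(1)] in \<open>auto simp: Suc_le_eq card_gt_0_iff\<close>)
  then show ?thesis
    by (subst complexity_Suc_eq_sum_Ex_r[OF assms(1,2)]) (simp add: complexity_def)
qed

lemma upt_split: "i \<le> j \<Longrightarrow> j \<le> k \<Longrightarrow> [i..<k] = [i..<j] @ [j..<k]"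
  using upt_add_eq_append[of i j "k - j"] by simp

lemma sublist_map_upt:
  assumes "i \<le> i'" "i' \<le> k'" "k' \<le> k"
  shows "sublist (map f [i'..<k']) (map f [i..<k])"
proof -
  have "[i..<k] = [i..<i'] @ [i'..<k]" using assms by (intro upt_split) simp_all
  also have "[i'..<k] = [i'..<k'] @ [k'..<k]" using assms by (intro upt_split) simp_all
  finally show ?thesis by simp
qed

lemma periodic_add_mult:
  fixes f :: "nat \<Rightarrow> 'b"
  assumes "\<And>k. f (k + q) = f k"
  shows "f (k + c * q) = f k"
proof (induction c)
  case (Suc c)
  have "f (k + Suc c * q) = f ((k + c * q) + q)" by (simp add: algebra_simps)
  with Suc show ?case by (simp only: assms)
qed simp

lemma map_upt_shift_period:
  fixes f :: "nat \<Rightarrow> 'b"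
  assumes "\<And>k. f (k + q) = f k"
  shows "map f [i + c * q..<k + c * q] = map f [i..<k]"
proof (rule nth_equalityI)
  fix t assume "t < length (map f [i + c * q..<k + c * q])"
  then show "map f [i + c * q..<k + c * q] ! t = map f [i..<k] ! t"
    using periodic_add_mult[where f = f, OF assms, of "i + t" c] by (simp add: algebra_simps)
qed simp

lemma map_upt_append_period:
  fixes f :: "nat \<Rightarrow> 'b"
  assumes "\<And>k. f (k + q) = f k" "j \<le> q"
  shows "map f [j..<q] @ map f [0..<x] = map f [j..<q + x]"
  using map_upt_shift_period[where f = f, OF assms(1), of 0 1 x] assms(2)
  by (simp add: upt_add_eq_append[of j q] add.commute)

lemma periodic_from_window:
  fixes P :: "nat \<Rightarrow> bool"
  assumes "\<And>k. P (k + q) = P k" "0 < q" "\<And>k. j \<le> k \<Longrightarrow> k < j + q \<Longrightarrow> P k"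
  shows "P k"
proof -
  define t where "t = k + j * q - j"
  have "j \<le> j * q" using assms(2) by simp
  then have "k + j * q = (j + t mod q) + (t div q) * q"
    using div_mult_mod_eq[of t q] unfolding t_def by linarith
  then have "P k = P (j + t mod q)"
    using periodic_add_mult[of P q, OF assms(1)] by metis
  moreover have "P (j + t mod q)" using assms(2,3) by simp
  ultimately show ?thesis by simp
qed

lemma periodic_of_equal_windows:
  fixes f :: "nat \<Rightarrow> 'b"
  assumes "\<And>k. f (k + q) = f k" "0 < q" "q \<le> n"
    and "map f [j..<j + n] = map f [j + d..<j + d + n]"
  shows "f (k + d) = f k"
proof (rule periodic_from_window[where P = "\<lambda>k. f (k + d) = f k" and q = q and j = j])
  show "(f (k + q + d) = f (k + q)) = (f (k + d) = f k)" for k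
    using assms(1)[of "k + d"] assms(1)[of k] by (simp add: ac_simps)
  show "f (k + d) = f k" if "j \<le> k" "k < j + q" for k
    using arg_cong[OF assms(4), of "\<lambda>xs. xs ! (k - j)"] that assms(3) by (simp add: ac_simps)
qed (use assms(2) in simp)

definition periodic_ext :: "'a list \<Rightarrow> nat \<Rightarrow> nat \<Rightarrow> 'a" where
  "periodic_ext w q k = w ! (k mod q)"

lemma periodic_ext_add_period [simp]: "periodic_ext w q (k + q) = periodic_ext w q k"
  by (simp add: periodic_ext_def)

lemma nth_eq_periodic_ext:
  assumes "has_period w q" "k < length w"
  shows "w ! k = periodic_ext w q k"
  using assms(2)
proof (induction k rule: less_induct)
  case (less k)
  show ?case
  proof (cases "k < q \<or> q = 0")
    case False
    have "drop q w ! (k - q) = take (length w - q) w ! (k - q)"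
      using assms(1) unfolding has_period_def by simp
    moreover have "k - q < length w - q" using False less.prems by linarith
    ultimately have "w ! k = w ! (k - q)" using False by simp
    also have "\<dots> = periodic_ext w q (k - q)" using less False by auto
    finally show ?thesis using False by (simp add: periodic_ext_def le_mod_geq)
  qed (auto simp: periodic_ext_def)
qed

lemma qpow_eq_map_periodic_ext:
  assumes "has_period w q" "q \<le> length w" "1 \<le> r"
  shows "qpow w q r = map (periodic_ext w q) [0..<length w + (r - 1) * q]"
  using assms(3)
proof (induction r rule: dec_induct)
  case base
  show ?case
    unfolding qpow_def by (auto intro!: nth_equalityI simp: nth_eq_periodic_ext[OF assms(1)])
next
  case (step r)
  have "qpow w q (Suc r) = take q w @ qpow w q r"
    using step(1) unfolding qpow_def by (cases r) simp_all
  also have "take q w = map (periodic_ext w q) [0..<q]"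
    using assms(2) by (auto intro!: nth_equalityI simp: periodic_ext_def)
  also have "\<dots> @ qpow w q r = map (periodic_ext w q) [0..<q + (length w + (r - 1) * q)]"
    unfolding step(3) by (rule map_upt_append_period) simp_all
  also have "q + (length w + (r - 1) * q) = length w + (Suc r - 1) * q"
    using step(1) by (cases r) simp_all
  finally show ?case .
qed

lemma qpow_Suc_eq_append:
  assumes "has_period w q" "q \<le> length w" "1 \<le> r"
  shows "qpow w q (r + 1) = map (periodic_ext w q) [0..<q] @ qpow w q r"
    and "qpow w q (r + 1) = qpow w q r
           @ map (periodic_ext w q) [length w + (r - 1) * q..<length w + r * q]"
proof -
  have len: "length w + r * q = q + (length w + (r - 1) * q)"
    using assms(3) by (cases r) simp_all
  have Suc_r: "qpow w q (r + 1) = map (periodic_ext w q) [0..<length w + r * q]"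
    using qpow_eq_map_periodic_ext[OF assms(1,2), of "r + 1"] by simp
  show "qpow w q (r + 1) = map (periodic_ext w q) [0..<q] @ qpow w q r"
    unfolding Suc_r qpow_eq_map_periodic_ext[OF assms] len
    by (simp add: map_upt_append_period)
  show "qpow w q (r + 1) = qpow w q r
           @ map (periodic_ext w q) [length w + (r - 1) * q..<length w + r * q]"
  proof -
    have "[0..<length w + r * q]
        = [0..<length w + (r - 1) * q] @ [length w + (r - 1) * q..<length w + r * q]"
      using upt_add_eq_append[of 0 "length w + (r - 1) * q" q] len by (simp add: ac_simps)
    then show ?thesis unfolding Suc_r qpow_eq_map_periodic_ext[OF assms] by simp
  qed
qed

lemma has_period_of_periodic_ext:
  assumes "has_period w q" "\<And>k. periodic_ext w q (k + d) = periodic_ext w q k"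
  shows "has_period w d"
  unfolding has_period_def
proof (rule nth_equalityI)
  fix i assume "i < length (drop d w)"
  then show "drop d w ! i = take (length w - d) w ! i"
    using nth_eq_periodic_ext[OF assms(1), of "d + i"] nth_eq_periodic_ext[OF assms(1), of i] assms(2)[of i]
    by (simp add: add.commute)
qed simp

lemma periodic_ext_of_periodic_ext:
  assumes "has_period w q" "\<And>k. periodic_ext w q (k + d) = periodic_ext w q k" "0 < d" "d \<le> length w"
  shows "periodic_ext w d k = periodic_ext w q k"
proof -
  have "k mod d < length w" using mod_less_divisor[OF assms(3), of k] assms(4) by linarith
  then have "periodic_ext w d k = periodic_ext w q (k mod d)"
    by (simp add: periodic_ext_def nth_eq_periodic_ext[OF assms(1)])
  also have "\<dots> = periodic_ext w q (k mod d + k div d * d)"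
    by (rule periodic_add_mult[where f = "periodic_ext w q", OF assms(2), symmetric])
  finally show ?thesis by simp
qed

lemma valid_step_of_smaller_period:
  assumes lang: "language A L" and valid: "valid_step L w q" and d: "0 < d" "d < q"
    and f_d: "\<And>k. periodic_ext w q (k + d) = periodic_ext w q k"
  shows "valid_step L w d"
proof -
  define f where "f = periodic_ext w q"
  define n where "n = length w"
  have q: "2 * q \<le> n" "has_period w q" "qpow w q 2 \<in> L" "2 \<le> n"
    using valid unfolding valid_step_def n_def by auto
  have period_d: "has_period w d" by (rule has_period_of_periodic_ext[OF q(2) f_d])
  have f_qd: "f (k + (q - d)) = f k" for k
  proof -
    have "f (k + (q - d)) = f (k + (q - d) + d)" using f_d by (simp add: f_def)
    also have "k + (q - d) + d = k + q" using d by simp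
    finally show ?thesis by (simp add: f_def)
  qed
  have "qpow w d 2 = map f [0..<n + d]"
    using qpow_eq_map_periodic_ext[OF period_d, of 2] periodic_ext_of_periodic_ext[OF q(2) f_d] d q(1)
    by (simp add: f_def n_def)
  also have "\<dots> = map f [0 + 1 * (q - d)..<n + d + 1 * (q - d)]"
    by (rule map_upt_shift_period[where f = f, OF f_qd, symmetric])
  also have "\<dots> = map f [q - d..<q + n]" using d by (simp add: add.commute)
  finally have qpow_d: "qpow w d 2 = map f [q - d..<q + n]" .
  have "qpow w q 2 = map f [0..<q - d] @ map f [q - d..<q + n]"
    using qpow_eq_map_periodic_ext[OF q(2), of 2] upt_add_eq_append[of 0 "q - d" "n + d"] d q(1)
    by (simp add: f_def n_def ac_simps)
  then have "sublist (qpow w d 2) (qpow w q 2)" by (simp add: qpow_d)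
  moreover have "qpow w d 2 \<noteq> []" using qpow_d d by simp
  ultimately have "qpow w d 2 \<in> L" using language_sublist[OF lang _ q(3)] by blast
  then show ?thesis using period_d d q unfolding valid_step_def n_def by auto
qed

lemma windows_distinct_of_min_valid_step:
  assumes "language A L" "valid_step L w q" "\<And>d. valid_step L w d \<Longrightarrow> q \<le> d"
    and "j < j'" "j' < j + q"
  shows "map (periodic_ext w q) [j..<j + length w] \<noteq> map (periodic_ext w q) [j'..<j' + length w]"
proof
  assume "map (periodic_ext w q) [j..<j + length w] = map (periodic_ext w q) [j'..<j' + length w]"
  then have windows: "map (periodic_ext w q) [j..<j + length w]
      = map (periodic_ext w q) [j + (j' - j)..<j + (j' - j) + length w]"
    using assms(4) by simp
  have "0 < q" "q \<le> length w" using assms(2) unfolding valid_step_def by auto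
  then have "periodic_ext w q (k + (j' - j)) = periodic_ext w q k" for k
    by (intro periodic_of_equal_windows[OF _ _ _ windows]) simp_all
  then have "valid_step L w (j' - j)"
    using valid_step_of_smaller_period[OF assms(1,2)] assms(4,5) by simp
  with assms(3)[of "j' - j"] assms(4,5) show False by simp
qed

lemma suffix_append_same_iff: "suffix (xs @ zs) (ys @ zs) \<longleftrightarrow> suffix xs ys"
  by (auto simp: suffix_def)

lemma suffix_tl_not_suffix:
  assumes "suffix (tl p) T" "\<not> suffix p T" "p \<noteq> []" "length p \<le> length T"
  shows "p = hd p # drop (Suc (length T - length p)) T \<and> hd p \<noteq> T ! (length T - length p)"
proof -
  obtain zs where T: "T = zs @ tl p" using assms(1) by (auto elim: suffixE)
  define k where "k = length T - length p"
  have zs: "length zs = Suc k" using T assms(3,4) by (cases p) (auto simp: k_def)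
  have p: "p = hd p # drop (Suc k) T" using T zs assms(3) by simp
  have "hd p \<noteq> T ! k"
  proof
    assume "hd p = T ! k"
    then have "p = T ! k # drop (Suc k) T" using p by simp
    also have "\<dots> = drop k T" by (rule Cons_nth_drop_Suc) (use zs T in simp)
    finally have "p = drop k T" .
    then show False using assms(2) suffix_drop by metis
  qed
  with p show ?thesis by (simp add: k_def)
qed

lemma prefix_butlast_not_prefix:
  assumes "prefix (butlast s) R" "\<not> prefix s R" "s \<noteq> []" "length s \<le> length R"
  shows "s = take (length s - 1) R @ [last s] \<and> last s \<noteq> R ! (length s - 1)"
proof -
  obtain zs where R: "R = butlast s @ zs" using assms(1) by (auto elim: prefixE)
  define k where "k = length s - 1"
  have s: "s = take k R @ [last s]" using R assms(3) by (simp add: k_def)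
  have "last s \<noteq> R ! k"
  proof
    assume "last s = R ! k"
    moreover have "k < length R" using assms(3,4) by (cases s) (simp_all add: k_def)
    ultimately have "s = take (Suc k) R" using s by (simp add: take_Suc_conv_app_nth)
    then show False using assms(2) take_is_prefix by metis
  qed
  with s show ?thesis by (simp add: k_def)
qed

lemma exit_word_decomposition:
  assumes valid: "valid_step L w q" and exit: "z \<in> exit_words L w q"
  obtains j m r a b where "1 \<le> j" "j \<le> q" "m < q" "1 \<le> r"
    "a \<noteq> periodic_ext w q (j - 1)" "b \<noteq> periodic_ext w q (length w + m)"
    "z = a # map (periodic_ext w q) [j..<length w + r * q + m] @ [b]" "z \<in> L"
proof -
  define f where "f = periodic_ext w q"
  define n where "n = length w"
  obtain p s r where z: "z = p @ qpow w q r @ s" "1 \<le> r"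
      "1 \<le> length p" "length p \<le> q" "1 \<le> length s" "length s \<le> q" "z \<in> L"
      "\<not> suffix (p @ qpow w q r) (qpow w q (r + 1))"
      "suffix (tl p @ qpow w q r) (qpow w q (r + 1))"
      "\<not> prefix (qpow w q r @ s) (qpow w q (r + 1))"
      "prefix (qpow w q r @ butlast s) (qpow w q (r + 1))"
    using exit unfolding exit_words_def by blast
  have per: "has_period w q" "q \<le> length w" using valid unfolding valid_step_def by auto
  define i where "i = n + (r - 1) * q"
  have i: "n + r * q = i + q" using z(2) by (cases r) (simp_all add: i_def)
  have W: "qpow w q r = map f [0..<i]"
    using qpow_eq_map_periodic_ext[OF per z(2)] by (simp add: f_def n_def i_def)
  have left: "suffix (tl p) (map f [0..<q])" "\<not> suffix p (map f [0..<q])"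
    using z(8,9) unfolding qpow_Suc_eq_append(1)[OF per z(2)]
    by (simp_all add: f_def suffix_append_same_iff)
  have right: "prefix (butlast s) (map f [i..<i + q])" "\<not> prefix s (map f [i..<i + q])"
    using z(10,11) i unfolding qpow_Suc_eq_append(2)[OF per z(2)] W
    by (simp_all add: f_def i_def n_def add.assoc)
  define j where "j = Suc (q - length p)"
  define m where "m = length s - 1"
  from suffix_tl_not_suffix[OF left] z(3,4)
  have p: "p = hd p # map f [j..<q]" "hd p \<noteq> f (j - 1)" by (auto simp: j_def drop_map Suc_le_eq)
  from prefix_butlast_not_prefix[OF right] z(5,6)
  have s: "s = map f [i..<i + m] @ [last s]" "last s \<noteq> f (i + m)" by (auto simp: m_def take_map Suc_le_eq)
  have "f (i + m) = f (n + m)"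
    using periodic_add_mult[where f = f, of q "n + m" "r - 1"] by (simp add: f_def i_def ac_simps)
  moreover have "z = hd p # map f [j..<n + r * q + m] @ [last s]"
  proof -
    have "map f [j..<q] @ map f [0..<i + m] = map f [j..<q + (i + m)]"
      using z(3,4) by (intro map_upt_append_period) (simp_all add: f_def j_def)
    moreover have "map f [0..<i + m] = map f [0..<i] @ map f [i..<i + m]"
      by (simp add: upt_add_eq_append[of 0 i m])
    moreover have "z = hd p # (map f [j..<q] @ map f [0..<i] @ map f [i..<i + m]) @ [last s]"
      using z(1) W p(1) s(1) by (metis append.assoc append_Cons)
    ultimately show ?thesis using i by (simp add: ac_simps)
  qed
  moreover have "1 \<le> j" "j \<le> q" "m < q" using z(3-6) by (auto simp: j_def m_def)
  ultimately show ?thesis using that p(2) s(2) z(2,7) unfolding f_def n_def by metis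
qed

lemma two_le_card:
  assumes "finite S" "x \<in> S" "y \<in> S" "x \<noteq> y"
  shows "2 \<le> card S"
  using card_mono[OF assms(1), of "{x, y}"] assms(2-4) by simp

lemma not_regular_bispecial_of_extensions:
  assumes lang: "language A L" and "a \<noteq> a'" "b \<noteq> b'"
    and "a # x @ [b] \<in> L" "a # x @ [b'] \<in> L" "a' # x @ [b] \<in> L" "a' # x @ [b'] \<in> L"
  shows "bispecial L x \<and> \<not> regular_bispecial L x"
proof -
  have prefix_in_L: "u # x \<in> L" if "u # x @ [v] \<in> L" for u v
    using language_sublist[OF lang _ that] by simp
  have suffix_in_L: "x @ [v] \<in> L" if "u # x @ [v] \<in> L" for u v
    using language_sublist[OF lang sublist_append_leftI[of "x @ [v]" "[u]"]] that by simp
  have Ex_l: "a \<in> Ex_l L x" "a' \<in> Ex_l L x"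
    using prefix_in_L assms(4,6) by (simp_all add: Ex_l_def)
  have Ex_r: "b \<in> Ex_r L x" "b' \<in> Ex_r L x"
    using suffix_in_L assms(4,5) by (simp_all add: Ex_r_def)
  have "right_special L (a # x)" "right_special L (a' # x)"
    unfolding right_special_def
    using two_le_card[OF finite_Ex_r[OF lang], of b "a # x" b'] 
      two_le_card[OF finite_Ex_r[OF lang], of b "a' # x" b'] assms(3-7)
    by (simp_all add: Ex_r_def)
  then have "\<not> regular_bispecial L x"
    using Ex_l assms(2) unfolding regular_bispecial_def by blast
  moreover have "bispecial L x"
    unfolding bispecial_def left_special_def right_special_def
    using two_le_card[OF finite_Ex_l[OF lang] Ex_l assms(2)]
      two_le_card[OF finite_Ex_r[OF lang] Ex_r assms(3)] by simp
  ultimately show ?thesis by simp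
qed

lemma periodic_repetition_extensions:
  fixes f :: "nat \<Rightarrow> 'a"
  assumes lang: "language A L" and f_q: "\<And>k. f (k + q) = f k" and q: "0 < q"
    and j: "1 \<le> j" "j \<le> N" and c: "2 \<le> c"
    and long: "a # map f [j..<N + c * q] @ [b] \<in> L"
  shows "a # map f [j..<N] @ [f N] \<in> L" "f (j - 1) # map f [j..<N] @ [f N] \<in> L"
    and "f (j - 1) # map f [j..<N] @ [b] \<in> L"
proof -
  have factor: "u \<in> L" if "a # map f [j..<N + c * q] @ [b] = ps @ u @ ss" "u \<noteq> []" for u ps ss
    using language_sublist[OF lang _ long] that by simp
  have cq: "2 * q \<le> c * q" using c by simp
  show "a # map f [j..<N] @ [f N] \<in> L"
  proof (rule factor)
    show "a # map f [j..<N + c * q] @ [b]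
        = [] @ (a # map f [j..<N] @ [f N]) @ (map f [Suc N..<N + c * q] @ [b])"
      using j q cq upt_add_eq_append[of j N "c * q"] by (simp add: upt_conv_Cons)
  qed simp
  show "f (j - 1) # map f [j..<N] @ [f N] \<in> L"
  proof (rule factor)
    have "f (j - 1) # map f [j..<N] @ [f N] = map f [j - 1 + 1 * q..<Suc N + 1 * q]"
      using j map_upt_shift_period[where f = f, OF f_q, of "j - 1" 1 "Suc N"]
      by (simp add: upt_conv_Cons)
    moreover have "[j..<N + c * q] = [j..<j - 1 + q] @ [j - 1 + q..<N + c * q]"
      by (intro upt_split; use j q cq in linarith)
    moreover have "[j - 1 + q..<N + c * q] = [j - 1 + q..<Suc N + q] @ [Suc N + q..<N + c * q]"
      by (intro upt_split; use j q cq in linarith)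
    ultimately show "a # map f [j..<N + c * q] @ [b] = (a # map f [j..<j - 1 + q])
        @ (f (j - 1) # map f [j..<N] @ [f N]) @ (map f [Suc N + q..<N + c * q] @ [b])"
      by simp
  qed simp
  show "f (j - 1) # map f [j..<N] @ [b] \<in> L"
  proof (rule factor)
    have "f (j - 1) # map f [j..<N] = map f [j - 1 + c * q..<N + c * q]"
      using j map_upt_shift_period[where f = f, OF f_q, of "j - 1" c N]
      by (simp add: upt_conv_Cons)
    moreover have "[j..<N + c * q] = [j..<j - 1 + c * q] @ [j - 1 + c * q..<N + c * q]"
      by (intro upt_split; use j q cq in linarith)
    ultimately show "a # map f [j..<N + c * q] @ [b]
        = (a # map f [j..<j - 1 + c * q]) @ (f (j - 1) # map f [j..<N] @ [b]) @ []"
      by simp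
  qed simp
qed

lemma long_repetition_not_regular_bispecial:
  fixes f :: "nat \<Rightarrow> 'a"
  assumes lang: "language A L" and f_q: "\<And>k. f (k + q) = f k" and q: "0 < q"
    and j: "1 \<le> j" "j < N" and c: "2 \<le> c"
    and a: "a \<noteq> f (j - 1)" and b: "b \<noteq> f N"
    and short: "a # map f [j..<N] @ [b] \<in> L"
    and long: "a # map f [j..<N + c * q] @ [b] \<in> L"
  shows "map f [j..<N] \<in> L \<and> bispecial L (map f [j..<N]) \<and> \<not> regular_bispecial L (map f [j..<N])"
proof -
  have "map f [j..<N] \<in> L"
    using language_sublist[OF lang sublist_appendI[of "map f [j..<N]" "[a]" "[b]"]] short j by simp
  moreover have "bispecial L (map f [j..<N]) \<and> \<not> regular_bispecial L (map f [j..<N])"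
    using periodic_repetition_extensions[OF lang f_q q j(1) _ c long] j(2)
    by (intro not_regular_bispecial_of_extensions[OF lang a b short]) simp_all
  ultimately show ?thesis by simp
qed

lemma finite_card_le_2_if_no_gap:
  fixes R :: "nat set"
  assumes "\<And>r r'. r \<in> R \<Longrightarrow> r' \<in> R \<Longrightarrow> \<not> r + 2 \<le> r'"
  shows "finite R \<and> card R \<le> 2"
proof (cases "R = {}")
  case False
  define r0 where "r0 = (LEAST r. r \<in> R)"
  have r0: "r0 \<in> R" "\<And>r. r \<in> R \<Longrightarrow> r0 \<le> r"
    using False unfolding r0_def by (auto intro: LeastI Least_le)
  have "R \<subseteq> {r0, Suc r0}"
    using assms[OF r0(1)] r0(2) by fastforce
  then show ?thesis using card_mono[of "{r0, Suc r0}" R] finite_subset[of R "{r0, Suc r0}"] by simp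
qed simp

lemma card_Sigma_Diff_singleton:
  assumes "finite J" "inj_on F J" "\<And>j. j \<in> J \<Longrightarrow> e j \<in> E (F j)" "\<And>v. finite (E v)"
  shows "card (SIGMA j:J. E (F j) - {e j}) = (\<Sum>v\<in>F ` J. card (E v) - 1)"
proof -
  have "card (SIGMA j:J. E (F j) - {e j}) = (\<Sum>j\<in>J. card (E (F j) - {e j}))"
    using assms(1,4) by (simp add: card_SigmaI)
  also have "\<dots> = (\<Sum>j\<in>J. card (E (F j)) - 1)"
    using assms(3) by (simp add: card_Diff_singleton)
  also have "\<dots> = (\<Sum>v\<in>F ` J. card (E v) - 1)"
    using sum.reindex[OF assms(2), of "\<lambda>v. card (E v) - 1"] by simp
  finally show ?thesis .
qed

locale minimal_valid_step =
  fixes A :: "'a set" and L :: "'a list set" and w :: "'a list" and q :: nat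
  assumes language: "language A L"
    and valid: "valid_step L w q"
    and minimal: "\<And>d. valid_step L w d \<Longrightarrow> q \<le> d"
begin

definition window :: "nat \<Rightarrow> 'a list" where
  "window j = map (periodic_ext w q) [j..<j + length w]"

definition left_exits :: "(nat \<times> 'a) set" where
  "left_exits = (SIGMA j:{1..q}. Ex_l L (window j) - {periodic_ext w q (j - 1)})"

definition right_exits :: "(nat \<times> 'a) set" where
  "right_exits = (SIGMA m:{..<q}. Ex_r L (window m) - {periodic_ext w q (length w + m)})"

text \<open>The exit word \<open>p @ qpow w q r @ s\<close> appears as \<open>exit_word j a m b r\<close> with \<open>length p = q + 1 - j\<close> and \<open>length s = m + 1\<close>.\<close>

definition exit_word :: "nat \<Rightarrow> 'a \<Rightarrow> nat \<Rightarrow> 'a \<Rightarrow> nat \<Rightarrow> 'a list" where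
  "exit_word j a m b r = a # map (periodic_ext w q) [j..<length w + r * q + m] @ [b]"

lemma step_bounds: "0 < q" "2 * q \<le> length w"
  using valid unfolding valid_step_def by auto

lemma periodic_factor_in_L:
  assumes "i < k" "k \<le> length w + q"
  shows "map (periodic_ext w q) [i..<k] \<in> L"
proof (rule language_sublist[OF language])
  have "qpow w q 2 = map (periodic_ext w q) [0..<length w + q]"
    using valid qpow_eq_map_periodic_ext[of w q 2] unfolding valid_step_def by simp
  then show "qpow w q 2 \<in> L" "sublist (map (periodic_ext w q) [i..<k]) (qpow w q 2)"
    using valid assms unfolding valid_step_def by (auto intro: sublist_map_upt)
qed (use assms in simp)

lemma window_in_L: "j \<le> q \<Longrightarrow> window j \<in> L"
  unfolding window_def using step_bounds by (intro periodic_factor_in_L) auto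

lemma periodic_letter_in_Ex_l:
  assumes "1 \<le> j" "j \<le> q"
  shows "periodic_ext w q (j - 1) \<in> Ex_l L (window j)"
  using periodic_factor_in_L[of "j - 1" "j + length w"] assms step_bounds
  by (simp add: Ex_l_def window_def upt_conv_Cons)

lemma periodic_letter_in_Ex_r:
  assumes "m < q"
  shows "periodic_ext w q (length w + m) \<in> Ex_r L (window m)"
  using periodic_factor_in_L[of m "Suc (m + length w)"] assms step_bounds
  by (simp add: Ex_r_def window_def add.commute)

lemma inj_on_window:
  assumes "\<And>j j'. j \<in> J \<Longrightarrow> j' \<in> J \<Longrightarrow> j < j' \<Longrightarrow> j' < j + q"
  shows "inj_on window J"
proof (rule inj_onI, rule ccontr)
  fix j j' assume "j \<in> J" "j' \<in> J" "window j = window j'" "j \<noteq> j'"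
  then show False
    using windows_distinct_of_min_valid_step[OF language valid minimal] assms
    unfolding window_def by (metis linorder_neqE_nat)
qed

lemma card_left_exits:
  "int (card left_exits) \<le> int (complexity L (Suc (length w))) - int (complexity L (length w))"
proof -
  have "card left_exits = (\<Sum>v\<in>window ` {1..q}. card (Ex_l L v) - 1)"
    unfolding left_exits_def
  proof (rule card_Sigma_Diff_singleton)
    show "inj_on window {1..q}" by (rule inj_on_window) auto
    show "j \<in> {1..q} \<Longrightarrow> periodic_ext w q (j - 1) \<in> Ex_l L (window j)" for j
      using periodic_letter_in_Ex_l[of j] by simp
  qed (simp_all add: finite_Ex_l[OF language])
  also have "int \<dots> \<le> int (complexity L (Suc (length w))) - int (complexity L (length w))"
    using step_bounds window_in_L
    by (intro left_excess_le_complexity_diff[OF language]) (auto simp: window_def)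
  finally show ?thesis by simp
qed

lemma card_right_exits:
  "int (card right_exits) \<le> int (complexity L (Suc (length w))) - int (complexity L (length w))"
proof -
  have "card right_exits = (\<Sum>v\<in>window ` {..<q}. card (Ex_r L v) - 1)"
    unfolding right_exits_def
  proof (rule card_Sigma_Diff_singleton)
    show "inj_on window {..<q}" by (rule inj_on_window) auto
    show "j \<in> {..<q} \<Longrightarrow> periodic_ext w q (length w + j) \<in> Ex_r L (window j)" for j
      using periodic_letter_in_Ex_r[of j] by simp
  qed (simp_all add: finite_Ex_r[OF language])
  also have "int \<dots> \<le> int (complexity L (Suc (length w))) - int (complexity L (length w))"
    using step_bounds window_in_L
    by (intro right_excess_le_complexity_diff[OF language]) (auto simp: window_def)
  finally show ?thesis by simp
qed

lemma exit_words_subset: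
  "exit_words L w q \<subseteq> (\<Union>((j, a), (m, b)) \<in> left_exits \<times> right_exits.
      exit_word j a m b ` {r. 1 \<le> r \<and> exit_word j a m b r \<in> L})"
proof
  fix z assume "z \<in> exit_words L w q"
  then obtain j m r a b where jm: "1 \<le> j" "j \<le> q" "m < q" "1 \<le> r"
    "a \<noteq> periodic_ext w q (j - 1)" "b \<noteq> periodic_ext w q (length w + m)"
    and z: "z = exit_word j a m b r" "z \<in> L"
    using exit_word_decomposition[OF valid] unfolding exit_word_def by metis
  have factor: "u \<in> L" if "z = ps @ u @ ss" "u \<noteq> []" for u ps ss
    using language_sublist[OF language _ z(2)] that by simp
  have "q \<le> r * q" using jm(4) by simp
  have "a \<in> Ex_l L (window j)"
  proof -
    have "[j..<length w + r * q + m] = [j..<j + length w] @ [j + length w..<length w + r * q + m]"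
      by (intro upt_split; use jm \<open>q \<le> r * q\<close> in linarith)
    then have "z = [] @ (a # window j) @ (map (periodic_ext w q) [j + length w..<length w + r * q + m] @ [b])"
      using z(1) by (simp add: exit_word_def window_def)
    then have "a # window j \<in> L" by (rule factor) simp
    then show ?thesis by (simp add: Ex_l_def)
  qed
  moreover have "b \<in> Ex_r L (window m)"
  proof -
    have "[j..<m + length w + r * q] = [j..<m + r * q] @ [m + r * q..<m + length w + r * q]"
      by (intro upt_split; use jm \<open>q \<le> r * q\<close> in linarith)
    moreover have "map (periodic_ext w q) [m + r * q..<m + length w + r * q] = window m"
      unfolding window_def by (rule map_upt_shift_period) simp
    ultimately have "z = (a # map (periodic_ext w q) [j..<m + r * q]) @ (window m @ [b]) @ []"
      using z(1) by (simp add: exit_word_def ac_simps)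
    then have "window m @ [b] \<in> L" by (rule factor) simp
    then show ?thesis by (simp add: Ex_r_def)
  qed
  ultimately have "((j, a), (m, b)) \<in> left_exits \<times> right_exits"
    using jm unfolding left_exits_def right_exits_def by auto
  moreover have "z \<in> exit_word j a m b ` {r. 1 \<le> r \<and> exit_word j a m b r \<in> L}"
    using jm z by auto
  ultimately show "z \<in> (\<Union>((j, a), (m, b)) \<in> left_exits \<times> right_exits.
      exit_word j a m b ` {r. 1 \<le> r \<and> exit_word j a m b r \<in> L})"
    by (auto intro!: bexI[of _ "(j, a)" left_exits] bexI[of _ "(m, b)" right_exits])
qed

lemma finite_exits: "finite left_exits" "finite right_exits"
  unfolding left_exits_def right_exits_def using finite_Ex_l[OF language] finite_Ex_r[OF language]
  by auto

lemma repetitions_card_le_2: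
  assumes regular: "\<And>x. x \<in> L \<Longrightarrow> bispecial L x \<Longrightarrow> n0 \<le> length x \<Longrightarrow> regular_bispecial L x"
    and long: "n0 \<le> length w" and exits: "(j, a) \<in> left_exits" "(m, b) \<in> right_exits"
  shows "finite {r. 1 \<le> r \<and> exit_word j a m b r \<in> L}
    \<and> card {r. 1 \<le> r \<and> exit_word j a m b r \<in> L} \<le> 2"
proof (rule finite_card_le_2_if_no_gap, clarify)
  fix r r' assume r: "1 \<le> r" "exit_word j a m b r \<in> L" "exit_word j a m b r' \<in> L" "r + 2 \<le> r'"
  define N where "N = length w + r * q + m"
  have j: "1 \<le> j" "j \<le> q" and a: "a \<noteq> periodic_ext w q (j - 1)"
    using exits(1) unfolding left_exits_def by auto
  have b: "b \<noteq> periodic_ext w q N"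
    using exits(2) periodic_add_mult[of "periodic_ext w q" q "length w + m" r]
    unfolding right_exits_def N_def by (auto simp: ac_simps)
  have "q \<le> r * q" using r(1) by simp
  then have "j < N" "n0 \<le> N - j" using j long step_bounds unfolding N_def by linarith+
  have "length w + r' * q + m = N + (r' - r) * q"
    using r(4) by (simp add: N_def diff_mult_distrib)
  then have "a # map (periodic_ext w q) [j..<N + (r' - r) * q] @ [b] \<in> L"
    using r(3) by (simp only: exit_word_def)
  moreover have "a # map (periodic_ext w q) [j..<N] @ [b] \<in> L"
    using r(2) by (simp only: exit_word_def N_def)
  ultimately have "map (periodic_ext w q) [j..<N] \<in> L \<and> bispecial L (map (periodic_ext w q) [j..<N])
      \<and> \<not> regular_bispecial L (map (periodic_ext w q) [j..<N])"
    using \<open>j < N\<close> r(4) a b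
    by (intro long_repetition_not_regular_bispecial[OF language _ step_bounds(1) j(1)]) simp_all
  with regular[of "map (periodic_ext w q) [j..<N]"] \<open>n0 \<le> N - j\<close> show False by simp
qed

lemma card_exit_words:
  assumes "\<And>x. x \<in> L \<Longrightarrow> bispecial L x \<Longrightarrow> n0 \<le> length x \<Longrightarrow> regular_bispecial L x"
    and "n0 \<le> length w"
  shows "finite (exit_words L w q)
    \<and> card (exit_words L w q) \<le> 2 * (card left_exits * card right_exits)"
proof -
  define R where "R = (\<lambda>((j, a), (m, b)). exit_word j a m b ` {r. 1 \<le> r \<and> exit_word j a m b r \<in> L})"
  have R: "finite (R e) \<and> card (R e) \<le> 2" if "e \<in> left_exits \<times> right_exits" for e
  proof -
    obtain j a m b where e: "e = ((j, a), (m, b))" "(j, a) \<in> left_exits" "(m, b) \<in> right_exits"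
      using \<open>e \<in> left_exits \<times> right_exits\<close> by (cases e) auto
    show ?thesis
      using repetitions_card_le_2[OF assms e(2,3)] card_image_le[of _ "exit_word j a m b"]
      unfolding R_def e(1) by fastforce
  qed
  have fin: "finite (left_exits \<times> right_exits)" using finite_exits by simp
  have sub: "exit_words L w q \<subseteq> (\<Union>e \<in> left_exits \<times> right_exits. R e)"
    using exit_words_subset unfolding R_def .
  have fin_UN: "finite (\<Union>e \<in> left_exits \<times> right_exits. R e)" using fin R by blast
  have "card (exit_words L w q) \<le> card (\<Union>e \<in> left_exits \<times> right_exits. R e)"
    using card_mono[OF fin_UN sub] .
  also have "\<dots> \<le> (\<Sum>e \<in> left_exits \<times> right_exits. card (R e))"
    using fin by (rule card_UN_le)
  also have "\<dots> \<le> 2 * (card left_exits * card right_exits)"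
    using sum_bounded_above[of "left_exits \<times> right_exits" "\<lambda>e. card (R e)" 2] R
    by (simp add: card_cartesian_product)
  finally show ?thesis using finite_subset[OF sub fin_UN] by simp
qed

lemma exit_words_bound:
  assumes "\<And>x. x \<in> L \<Longrightarrow> bispecial L x \<Longrightarrow> n0 \<le> length x \<Longrightarrow> regular_bispecial L x"
    and "n0 \<le> length w"
    and K: "int (complexity L (Suc (length w))) - int (complexity L (length w)) = K"
  shows "finite (exit_words L w q) \<and> int (card (exit_words L w q)) \<le> 2 * K ^ 2"
proof -
  have "int (card left_exits) * int (card right_exits) \<le> K * K"
    using card_left_exits card_right_exits K by (intro mult_mono) simp_all
  moreover have card: "finite (exit_words L w q)
      \<and> card (exit_words L w q) \<le> 2 * (card left_exits * card right_exits)"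
    by (rule card_exit_words[OF assms(1,2)])
  then have "int (card (exit_words L w q)) \<le> int (2 * (card left_exits * card right_exits))"
    by (intro of_nat_mono) simp
  ultimately show ?thesis using card unfolding power2_eq_square by simp
qed

end

theorem mainTheorem16:
  fixes A :: "'a set" and L :: "'a list set" and K :: int
  assumes "language A L" and "RBC L" and "growth_constant L K"
  shows "\<exists>N. \<forall>w\<in>L. length w \<ge> N \<and> (\<exists>q. valid_step L w q) \<longrightarrow>
           finite (exit_words L w (min_valid_step L w))
           \<and> int (card (exit_words L w (min_valid_step L w))) \<le> 2 * K ^ 2"
proof -
  obtain n0 where regular: "\<And>x. x \<in> L \<Longrightarrow> bispecial L x \<Longrightarrow> n0 \<le> length x \<Longrightarrow> regular_bispecial L x"
    using assms(2) unfolding RBC_def by blast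
  obtain n1 where K: "\<And>n. n1 \<le> n \<Longrightarrow> int (complexity L (Suc n)) - int (complexity L n) = K"
    using assms(3) unfolding growth_constant_def by blast
  have "finite (exit_words L w (min_valid_step L w))
      \<and> int (card (exit_words L w (min_valid_step L w))) \<le> 2 * K ^ 2"
    if "n0 + n1 \<le> length w" "valid_step L w d" for w d
  proof -
    interpret minimal_valid_step A L w "min_valid_step L w"
      using assms(1) LeastI[of "valid_step L w", OF that(2)] Least_le[of "valid_step L w"]
      by unfold_locales (simp_all add: min_valid_step_def)
    show ?thesis using exit_words_bound[OF regular] K[of "length w"] that(1) by simp
  qed
  then show ?thesis by blast
qed

end
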